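(* Let $i:M\to N$ be a normal monomorphism of algebraic lattices (identify $M$ with $i(M)$) and $L$ an algebraic sub-lattice of $M$ with maximal element $1_L$. Let $\pi:M\to M/L$ and $\pi':N\to N/L$ be the maps $x\mapsto x\vee 1_L$, where $M/L=\{x\in M:x\ge1_L\}$ and $N/L=\{x\in N:x\ge 1_L\}$. Then $\pi,\pi'$ are normal epimorphisms, the induced map $i':M/L\to N/L$, $x\mapsto i(x)$, is a normal monomorphism, and the square with top $i$, left $\pi$, right $\pi'$, bottom $i'$ is both a pullback and a pushout in the category $\mathcal{L}$ of algebraic lattices.
   Context: An element $x$ of a complete lattice is compact if every cover $x\le\bigvee_{i\in I}y_i$ has a finite subcover. An algebraic lattice is a complete lattice in which every element is a join of compact elements. Morphisms in $\mathcal{L}$ preserve arbitrary joins and send compact elements to compact elements. A morphism $f:L_1\to L_2$ is a normal monomorphism if injective with downward closed image, and a normal epimorphism if there is $x_0\in L_1$ and an isomorphism $\varphi:\{y\in L_1:y\ge x_0\}\to L_2$ with $f(y)=\varphi(y\vee x_0)$. An algebraic sub-lattice of $M$ is a subset which is itself an algebraic lattice such that the inclusion is a normal monomorphism. *)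

theory Defs
  imports "HOL-Algebra.Complete_Lattice"
begin

definition compact_elem :: "'a gorder \<Rightarrow> 'a \<Rightarrow> bool" where
  "compact_elem L x \<longleftrightarrow> x \<in> carrier L \<and>
     (\<forall>Y. Y \<subseteq> carrier L \<longrightarrow> x \<sqsubseteq>\<^bsub>L\<^esub> \<Squnion>\<^bsub>L\<^esub> Y \<longrightarrow>
        (\<exists>F. finite F \<and> F \<subseteq> Y \<and> x \<sqsubseteq>\<^bsub>L\<^esub> \<Squnion>\<^bsub>L\<^esub> F))"

definition algebraic_lattice :: "'a gorder \<Rightarrow> bool" where
  "algebraic_lattice L \<longleftrightarrow> complete_lattice L \<and>
     (\<forall>x\<in>carrier L. \<exists>Y. Y \<subseteq> {c. compact_elem L c} \<and> x = \<Squnion>\<^bsub>L\<^esub> Y)"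

definition alg_morphism :: "'a gorder \<Rightarrow> 'b gorder \<Rightarrow> ('a \<Rightarrow> 'b) \<Rightarrow> bool" where
  "alg_morphism X Y f \<longleftrightarrow> algebraic_lattice X \<and> algebraic_lattice Y \<and>
     f \<in> carrier X \<rightarrow> carrier Y \<and> sup_pres X Y f \<and>
     (\<forall>c. compact_elem X c \<longrightarrow> compact_elem Y (f c))"

definition alg_iso :: "'a gorder \<Rightarrow> 'b gorder \<Rightarrow> ('a \<Rightarrow> 'b) \<Rightarrow> bool" where
  "alg_iso X Y f \<longleftrightarrow> alg_morphism X Y f \<and>
     (\<exists>g. alg_morphism Y X g \<and> (\<forall>x\<in>carrier X. g (f x) = x) \<and> (\<forall>y\<in>carrier Y. f (g y) = y))"

definition normal_mono :: "'a gorder \<Rightarrow> 'b gorder \<Rightarrow> ('a \<Rightarrow> 'b) \<Rightarrow> bool" where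
  "normal_mono X Y f \<longleftrightarrow> alg_morphism X Y f \<and> inj_on f (carrier X) \<and>
     (\<forall>y\<in>carrier Y. \<forall>x\<in>carrier X. y \<sqsubseteq>\<^bsub>Y\<^esub> f x \<longrightarrow> y \<in> f ` carrier X)"

definition upset :: "'a gorder \<Rightarrow> 'a \<Rightarrow> 'a gorder" where
  "upset L x0 = L\<lparr>carrier := {y \<in> carrier L. x0 \<sqsubseteq>\<^bsub>L\<^esub> y}\<rparr>"

definition normal_epi :: "'a gorder \<Rightarrow> 'b gorder \<Rightarrow> ('a \<Rightarrow> 'b) \<Rightarrow> bool" where
  "normal_epi X Y f \<longleftrightarrow> alg_morphism X Y f \<and>
     (\<exists>x0\<in>carrier X. \<exists>\<phi>. alg_iso (upset X x0) Y \<phi> \<and>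
        (\<forall>y\<in>carrier X. f y = \<phi> (y \<squnion>\<^bsub>X\<^esub> x0)))"

definition algebraic_sublattice :: "'a set \<Rightarrow> 'a gorder \<Rightarrow> bool" where
  "algebraic_sublattice S M \<longleftrightarrow> S \<subseteq> carrier M \<and>
     algebraic_lattice (M\<lparr>carrier := S\<rparr>) \<and> normal_mono (M\<lparr>carrier := S\<rparr>) M id"

text \<open>Commutative square  A --top--> B,  A --left--> C,  B --right--> D,  C --bot--> D.\<close>
definition is_pullback :: "'a gorder \<Rightarrow> 'b gorder \<Rightarrow> 'c gorder \<Rightarrow> 'd gorder \<Rightarrow>
   ('a \<Rightarrow> 'b) \<Rightarrow> ('a \<Rightarrow> 'c) \<Rightarrow> ('b \<Rightarrow> 'd) \<Rightarrow> ('c \<Rightarrow> 'd) \<Rightarrow> 'p itself \<Rightarrow> bool" where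
  "is_pullback A B C D t l r b (_ :: 'p itself) \<longleftrightarrow>
     (\<forall>x\<in>carrier A. r (t x) = b (l x)) \<and>
     (\<forall>(P :: 'p gorder) g h. alg_morphism P B g \<and> alg_morphism P C h \<and>
        (\<forall>x\<in>carrier P. r (g x) = b (h x)) \<longrightarrow>
        (\<exists>u. alg_morphism P A u \<and> (\<forall>x\<in>carrier P. t (u x) = g x \<and> l (u x) = h x) \<and>
           (\<forall>u'. alg_morphism P A u' \<and> (\<forall>x\<in>carrier P. t (u' x) = g x \<and> l (u' x) = h x)
                 \<longrightarrow> (\<forall>x\<in>carrier P. u' x = u x))))"

definition is_pushout :: "'a gorder \<Rightarrow> 'b gorder \<Rightarrow> 'c gorder \<Rightarrow> 'd gorder \<Rightarrow>
   ('a \<Rightarrow> 'b) \<Rightarrow> ('a \<Rightarrow> 'c) \<Rightarrow> ('b \<Rightarrow> 'd) \<Rightarrow> ('c \<Rightarrow> 'd) \<Rightarrow> 'q itself \<Rightarrow> bool" where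
  "is_pushout A B C D t l r b (_ :: 'q itself) \<longleftrightarrow>
     (\<forall>x\<in>carrier A. r (t x) = b (l x)) \<and>
     (\<forall>(Q :: 'q gorder) g h. alg_morphism B Q g \<and> alg_morphism C Q h \<and>
        (\<forall>x\<in>carrier A. g (t x) = h (l x)) \<longrightarrow>
        (\<exists>v. alg_morphism D Q v \<and> (\<forall>y\<in>carrier B. v (r y) = g y) \<and> (\<forall>z\<in>carrier C. v (b z) = h z) \<and>
           (\<forall>v'. alg_morphism D Q v' \<and> (\<forall>y\<in>carrier B. v' (r y) = g y) \<and> (\<forall>z\<in>carrier C. v' (b z) = h z)
                 \<longrightarrow> (\<forall>w\<in>carrier D. v' w = v w))))"

end

theory Submission
  imports Defs
begin

text \<open>Only the top element \<open>e\<close> of \<open>L\<close> matters: both quotients are principal up-sets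
  \<open>{x. e \<le> x}\<close>, and \<open>x \<mapsto> x \<squnion> e\<close> is a join-preserving retraction onto the up-set whose
  compact elements are exactly the \<open>k \<squnion> e\<close> with \<open>k\<close> compact.  A normal monomorphism
  restricts to the up-sets.  The square is a pullback because a cone over \<open>N\<close> and \<open>M/L\<close> lands
  below the image of \<open>i\<close>, which is downward closed, so it factors uniquely through the injective
  \<open>i\<close>.  It is a pushout because any cocone \<open>g\<close>, \<open>h\<close> must send \<open>i e\<close> to the bottom
  (as \<open>e\<close> and \<open>\<bottom>\<close> have the same image in \<open>M/L\<close>), so \<open>g\<close> itself, restricted to \<open>N/L\<close>,
  is the unique mediating map.\<close>

lemma (in complete_lattice) sup_eqI:
  assumes "A \<subseteq> carrier L" "s \<in> carrier L" "\<And>a. a \<in> A \<Longrightarrow> a \<sqsubseteq> s"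
    "\<And>z. z \<in> carrier L \<Longrightarrow> (\<And>a. a \<in> A \<Longrightarrow> a \<sqsubseteq> z) \<Longrightarrow> s \<sqsubseteq> z"
  shows "\<Squnion>A = s"
  using assms by (intro le_antisym sup_least) (auto intro: sup_upper assms(4))

lemma (in complete_lattice) join_eq_left:
  assumes "x \<in> carrier L" "y \<in> carrier L" "y \<sqsubseteq> x"
  shows "x \<squnion> y = x"
  using assms le_iff_meet join_comm by metis

lemma (in complete_lattice) sup_mono:
  assumes "A \<subseteq> B" "B \<subseteq> carrier L"
  shows "\<Squnion>A \<sqsubseteq> \<Squnion>B"
  using assms by (intro sup_least) (auto intro: sup_upper)

lemma (in complete_lattice) sup_insert_join:
  assumes "A \<subseteq> carrier L" "a \<in> carrier L"
  shows "\<Squnion>(insert a A) = \<Squnion>A \<squnion> a"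
proof (rule sup_eqI)
  fix z assume "z \<in> carrier L" "\<And>x. x \<in> insert a A \<Longrightarrow> x \<sqsubseteq> z"
  then show "\<Squnion>A \<squnion> a \<sqsubseteq> z" using assms by (intro join_le sup_least) auto
qed (use assms in \<open>auto intro: le_trans[OF sup_upper join_left] join_right\<close>)

lemma upset_carrier: "carrier (upset L a) = {y \<in> carrier L. a \<sqsubseteq>\<^bsub>L\<^esub> y}"
  by (simp add: upset_def)

lemma upset_le [simp]: "le (upset L a) = le L"
  by (simp add: upset_def)

lemma upset_interval:
  assumes "complete_lattice L"
  shows "upset L a = L\<lparr>carrier := \<lbrace>a..\<top>\<^bsub>L\<^esub>\<rbrace>\<^bsub>L\<^esub>\<rparr>"
proof -
  interpret L: complete_lattice L by fact
  have "{y \<in> carrier L. a \<sqsubseteq>\<^bsub>L\<^esub> y} = \<lbrace>a..\<top>\<^bsub>L\<^esub>\<rbrace>\<^bsub>L\<^esub>"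
    by (auto simp: at_least_at_most_def)
  then show ?thesis by (simp add: upset_def)
qed

lemma complete_lattice_upset:
  assumes "complete_lattice L" "a \<in> carrier L"
  shows "complete_lattice (upset L a)"
proof -
  interpret L: complete_lattice L by fact
  interpret U: weak_complete_lattice "upset L a"
    unfolding upset_interval[OF assms(1)]
    by (rule weak_complete_lattice_interval) (use assms in \<open>auto intro: L.weak.weak_complete_lattice_axioms\<close>)
  have "partial_order (upset L a)"
    by unfold_locales (simp add: upset_def L.eq_is_equal)
  then show ?thesis
    by (rule complete_lattice.intro) (unfold_locales, use U.sup_exists U.inf_exists in auto)
qed

lemma sup_upset:
  assumes "complete_lattice L" "a \<in> carrier L" "A \<subseteq> carrier (upset L a)"
  shows "\<Squnion>\<^bsub>upset L a\<^esub> A = \<Squnion>\<^bsub>L\<^esub> (insert a A)"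
proof -
  interpret L: complete_lattice L by fact
  interpret U: complete_lattice "upset L a" by (rule complete_lattice_upset[OF assms(1,2)])
  have AL: "insert a A \<subseteq> carrier L" using assms(2,3) by (auto simp: upset_carrier)
  show ?thesis
    by (rule U.sup_eqI) (use assms AL in \<open>auto simp: upset_carrier intro: L.sup_upper L.sup_least\<close>)
qed

lemma sup_upset_join_image:
  assumes "complete_lattice L" "a \<in> carrier L" "K \<subseteq> carrier L"
  shows "\<Squnion>\<^bsub>upset L a\<^esub> ((\<lambda>k. k \<squnion>\<^bsub>L\<^esub> a) ` K) = \<Squnion>\<^bsub>L\<^esub> K \<squnion>\<^bsub>L\<^esub> a"
proof -
  interpret L: complete_lattice L by fact
  have "(\<lambda>k. k \<squnion>\<^bsub>L\<^esub> a) ` K \<subseteq> carrier (upset L a)"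
    using assms by (auto simp: upset_carrier intro: L.join_right)
  moreover have "\<Squnion>\<^bsub>L\<^esub> (insert a ((\<lambda>k. k \<squnion>\<^bsub>L\<^esub> a) ` K)) = \<Squnion>\<^bsub>L\<^esub> K \<squnion>\<^bsub>L\<^esub> a"
  proof (rule L.sup_eqI)
    fix z assume z: "z \<in> carrier L" "\<And>x. x \<in> insert a ((\<lambda>k. k \<squnion>\<^bsub>L\<^esub> a) ` K) \<Longrightarrow> x \<sqsubseteq>\<^bsub>L\<^esub> z"
    have "\<Squnion>\<^bsub>L\<^esub> K \<sqsubseteq>\<^bsub>L\<^esub> z"
    proof (rule L.sup_least[OF assms(3) z(1)])
      fix k assume k: "k \<in> K"
      then have "k \<squnion>\<^bsub>L\<^esub> a \<sqsubseteq>\<^bsub>L\<^esub> z" using z(2) by blast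
      moreover have "k \<in> carrier L" using k assms(3) by auto
      ultimately show "k \<sqsubseteq>\<^bsub>L\<^esub> z"
        using assms(2) z(1) by (meson L.join_closed L.join_left L.le_trans)
    qed
    then show "\<Squnion>\<^bsub>L\<^esub> K \<squnion>\<^bsub>L\<^esub> a \<sqsubseteq>\<^bsub>L\<^esub> z" using assms z by (intro L.join_le) auto
  next
    fix x assume "x \<in> insert a ((\<lambda>k. k \<squnion>\<^bsub>L\<^esub> a) ` K)"
    then show "x \<sqsubseteq>\<^bsub>L\<^esub> \<Squnion>\<^bsub>L\<^esub> K \<squnion>\<^bsub>L\<^esub> a"
      using assms
      by (auto intro: L.join_right)
        (meson L.join_le L.join_left L.join_right L.le_trans L.sup_upper L.sup_closed L.join_closed subsetD)
  qed (use assms in \<open>auto intro: L.join_right\<close>)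
  ultimately show ?thesis using sup_upset[OF assms(1,2)] by simp
qed

lemma compact_elem_carrier: "compact_elem L c \<Longrightarrow> c \<in> carrier L"
  by (simp add: compact_elem_def)

lemma compact_elem_bottom:
  assumes "complete_lattice L"
  shows "compact_elem L (\<Squnion>\<^bsub>L\<^esub> {})"
proof -
  interpret complete_lattice L by fact
  show ?thesis unfolding compact_elem_def by (auto intro: sup_least)
qed

lemma compact_elem_join:
  assumes "complete_lattice L" "compact_elem L x" "compact_elem L y"
  shows "compact_elem L (x \<squnion>\<^bsub>L\<^esub> y)"
proof -
  interpret complete_lattice L by fact
  have xy: "x \<in> carrier L" "y \<in> carrier L" using assms(2,3) by (auto simp: compact_elem_def)
  show ?thesis unfolding compact_elem_def
  proof (intro conjI allI impI)
    fix Y assume Y: "Y \<subseteq> carrier L" and le: "x \<squnion>\<^bsub>L\<^esub> y \<sqsubseteq>\<^bsub>L\<^esub> \<Squnion>\<^bsub>L\<^esub> Y"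
    have "x \<sqsubseteq>\<^bsub>L\<^esub> \<Squnion>\<^bsub>L\<^esub> Y" "y \<sqsubseteq>\<^bsub>L\<^esub> \<Squnion>\<^bsub>L\<^esub> Y"
      using le xy Y by (auto intro: le_trans[OF join_left] le_trans[OF join_right])
    then obtain F G where "finite F" "F \<subseteq> Y" "x \<sqsubseteq>\<^bsub>L\<^esub> \<Squnion>\<^bsub>L\<^esub> F"
      and "finite G" "G \<subseteq> Y" "y \<sqsubseteq>\<^bsub>L\<^esub> \<Squnion>\<^bsub>L\<^esub> G"
      using assms(2,3) Y unfolding compact_elem_def by meson
    moreover have FG: "F \<subseteq> carrier L" "G \<subseteq> carrier L" using calculation Y by auto
    ultimately have "x \<sqsubseteq>\<^bsub>L\<^esub> \<Squnion>\<^bsub>L\<^esub> (F \<union> G)" "y \<sqsubseteq>\<^bsub>L\<^esub> \<Squnion>\<^bsub>L\<^esub> (F \<union> G)"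
      using xy by (meson Un_upper1 Un_upper2 Un_least sup_closed sup_mono le_trans)+
    then show "\<exists>H. finite H \<and> H \<subseteq> Y \<and> x \<squnion>\<^bsub>L\<^esub> y \<sqsubseteq>\<^bsub>L\<^esub> \<Squnion>\<^bsub>L\<^esub> H"
      using \<open>finite F\<close> \<open>finite G\<close> \<open>F \<subseteq> Y\<close> \<open>G \<subseteq> Y\<close> xy FG
      by (intro exI[of _ "F \<union> G"]) (auto intro: join_le)
  qed (simp add: xy)
qed

lemma compact_elem_finite_sup:
  assumes "complete_lattice L" "finite F" "F \<subseteq> {c. compact_elem L c}"
  shows "compact_elem L (\<Squnion>\<^bsub>L\<^esub> F)"
  using assms(2,3)
proof (induction F rule: finite_induct)
  case empty
  show ?case by (rule compact_elem_bottom[OF assms(1)])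
next
  case (insert x F)
  then have "\<Squnion>\<^bsub>L\<^esub> (insert x F) = \<Squnion>\<^bsub>L\<^esub> F \<squnion>\<^bsub>L\<^esub> x"
    by (intro complete_lattice.sup_insert_join[OF assms(1)]) (auto simp: compact_elem_def)
  then show ?case using insert by (auto intro: compact_elem_join[OF assms(1)])
qed

lemma compact_elem_upset_join:
  assumes "complete_lattice L" "a \<in> carrier L" "compact_elem L k"
  shows "compact_elem (upset L a) (k \<squnion>\<^bsub>L\<^esub> a)"
proof -
  interpret L: complete_lattice L by fact
  interpret U: complete_lattice "upset L a" by (rule complete_lattice_upset[OF assms(1,2)])
  have k: "k \<in> carrier L" using assms(3) by (rule compact_elem_carrier)
  show ?thesis unfolding compact_elem_def
  proof (intro conjI allI impI)
    show "k \<squnion>\<^bsub>L\<^esub> a \<in> carrier (upset L a)"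
      using k assms(2) by (auto simp: upset_carrier intro: L.join_right)
    fix Y assume Y: "Y \<subseteq> carrier (upset L a)"
      and le: "k \<squnion>\<^bsub>L\<^esub> a \<sqsubseteq>\<^bsub>upset L a\<^esub> \<Squnion>\<^bsub>upset L a\<^esub> Y"
    have aY: "insert a Y \<subseteq> carrier L" using Y assms(2) by (auto simp: upset_carrier)
    have "k \<squnion>\<^bsub>L\<^esub> a \<sqsubseteq>\<^bsub>L\<^esub> \<Squnion>\<^bsub>L\<^esub> (insert a Y)"
      using le unfolding sup_upset[OF assms(1,2) Y] by simp
    then have "k \<sqsubseteq>\<^bsub>L\<^esub> \<Squnion>\<^bsub>L\<^esub> (insert a Y)"
      by (rule L.le_trans[OF L.join_left[OF k assms(2)]]) (use k assms(2) aY in simp_all)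
    then obtain F where F: "finite F" "F \<subseteq> insert a Y" "k \<sqsubseteq>\<^bsub>L\<^esub> \<Squnion>\<^bsub>L\<^esub> F"
      using assms(3) aY unfolding compact_elem_def by blast
    \<comment> \<open>\<open>a\<close> lies below every join in the up-set, so it can be dropped from the subcover\<close>
    let ?s = "\<Squnion>\<^bsub>upset L a\<^esub> (F - {a})"
    have FY: "F - {a} \<subseteq> carrier (upset L a)" using F(2) Y by auto
    then have s: "?s \<in> carrier L" "a \<sqsubseteq>\<^bsub>L\<^esub> ?s"
      using U.sup_closed[OF FY] by (auto simp: upset_carrier)
    have "\<Squnion>\<^bsub>L\<^esub> F \<sqsubseteq>\<^bsub>L\<^esub> ?s"
      unfolding sup_upset[OF assms(1,2) FY] using F(2) aY by (intro L.sup_mono) auto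
    then have "k \<sqsubseteq>\<^bsub>L\<^esub> ?s"
      using F(2,3) aY k s by (meson L.le_trans L.sup_closed subset_trans)
    then have "k \<squnion>\<^bsub>L\<^esub> a \<sqsubseteq>\<^bsub>upset L a\<^esub> ?s" using k s assms(2) by (simp add: L.join_le)
    then show "\<exists>G. finite G \<and> G \<subseteq> Y \<and> k \<squnion>\<^bsub>L\<^esub> a \<sqsubseteq>\<^bsub>upset L a\<^esub> \<Squnion>\<^bsub>upset L a\<^esub> G"
      using F(1,2) by (intro exI[of _ "F - {a}"]) auto
  qed
qed

lemma compact_elem_upsetE:
  assumes "algebraic_lattice L" "a \<in> carrier L" "compact_elem (upset L a) c"
  obtains k where "compact_elem L k" "c = k \<squnion>\<^bsub>L\<^esub> a"
proof -
  have cl: "complete_lattice L" using assms(1) by (simp add: algebraic_lattice_def)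
  interpret L: complete_lattice L by fact
  interpret U: complete_lattice "upset L a" by (rule complete_lattice_upset[OF cl assms(2)])
  have cU: "c \<in> carrier (upset L a)" using assms(3) by (rule compact_elem_carrier)
  then have cL: "c \<in> carrier L" "a \<sqsubseteq>\<^bsub>L\<^esub> c" by (auto simp: upset_carrier)
  obtain K where K: "K \<subseteq> {c. compact_elem L c}" "c = \<Squnion>\<^bsub>L\<^esub> K"
    using assms(1) cL by (auto simp: algebraic_lattice_def)
  have KL: "K \<subseteq> carrier L" using K(1) by (auto dest: compact_elem_carrier)
  let ?Y = "(\<lambda>k. k \<squnion>\<^bsub>L\<^esub> a) ` K"
  have YU: "?Y \<subseteq> carrier (upset L a)"
    using KL assms(2) by (auto simp: upset_carrier intro: L.join_right)
  have cY: "c = \<Squnion>\<^bsub>upset L a\<^esub> ?Y"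
    using sup_upset_join_image[OF cl assms(2) KL] K(2) L.join_eq_left[OF cL(1) assms(2) cL(2)] by simp
  then obtain G where G: "finite G" "G \<subseteq> ?Y" "c \<sqsubseteq>\<^bsub>upset L a\<^esub> \<Squnion>\<^bsub>upset L a\<^esub> G"
    using assms(3) YU U.le_refl[OF cU] unfolding compact_elem_def by metis
  obtain F where F: "F \<subseteq> K" "finite F" "G = (\<lambda>k. k \<squnion>\<^bsub>L\<^esub> a) ` F"
    using finite_subset_image[OF G(1,2)] by blast
  have FL: "F \<subseteq> carrier L" using F(1) KL by auto
  have "\<Squnion>\<^bsub>upset L a\<^esub> G \<sqsubseteq>\<^bsub>upset L a\<^esub> c"
    using U.sup_mono[OF G(2) YU] cY by simp
  then have "c = \<Squnion>\<^bsub>L\<^esub> F \<squnion>\<^bsub>L\<^esub> a"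
    using G(3) cL(1) assms(2) FL sup_upset_join_image[OF cl assms(2) FL] F(3)
    by (intro L.le_antisym) auto
  moreover have "compact_elem L (\<Squnion>\<^bsub>L\<^esub> F)"
    using F K(1) by (intro compact_elem_finite_sup[OF cl]) auto
  ultimately show thesis by (rule that[rotated])
qed

lemma algebraic_lattice_upset:
  assumes "algebraic_lattice L" "a \<in> carrier L"
  shows "algebraic_lattice (upset L a)"
proof -
  have cl: "complete_lattice L" using assms(1) by (simp add: algebraic_lattice_def)
  interpret L: complete_lattice L by fact
  show ?thesis unfolding algebraic_lattice_def
  proof (intro conjI ballI)
    show "complete_lattice (upset L a)" by (rule complete_lattice_upset[OF cl assms(2)])
    fix x assume "x \<in> carrier (upset L a)"
    then have x: "x \<in> carrier L" "a \<sqsubseteq>\<^bsub>L\<^esub> x" by (auto simp: upset_carrier)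
    obtain K where K: "K \<subseteq> {c. compact_elem L c}" "x = \<Squnion>\<^bsub>L\<^esub> K"
      using assms(1) x(1) by (auto simp: algebraic_lattice_def)
    have KL: "K \<subseteq> carrier L" using K(1) by (auto dest: compact_elem_carrier)
    have "x = \<Squnion>\<^bsub>upset L a\<^esub> ((\<lambda>k. k \<squnion>\<^bsub>L\<^esub> a) ` K)"
      using sup_upset_join_image[OF cl assms(2) KL] K(2) L.join_eq_left[OF x(1) assms(2) x(2)] by simp
    moreover have "(\<lambda>k. k \<squnion>\<^bsub>L\<^esub> a) ` K \<subseteq> {c. compact_elem (upset L a) c}"
      using K(1) compact_elem_upset_join[OF cl assms(2)] by auto
    ultimately show "\<exists>Y. Y \<subseteq> {c. compact_elem (upset L a) c} \<and> x = \<Squnion>\<^bsub>upset L a\<^esub> Y"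
      by blast
  qed
qed

lemma sup_pres_join:
  assumes "sup_pres X Y f" "x \<in> carrier X" "y \<in> carrier X"
  shows "f (x \<squnion>\<^bsub>X\<^esub> y) = f x \<squnion>\<^bsub>Y\<^esub> f y"
  using sup_pres_is_join_pres[OF weak_sup_pres[OF assms(1)]] assms(2,3) by (simp add: join_pres_def)

lemma sup_pres_bottom:
  assumes "sup_pres X Y f"
  shows "f (\<Squnion>\<^bsub>X\<^esub> {}) = \<Squnion>\<^bsub>Y\<^esub> {}"
  using assms by (simp add: sup_pres_def)

lemma sup_pres_mono:
  assumes "sup_pres X Y f" "f \<in> carrier X \<rightarrow> carrier Y"
    "x \<in> carrier X" "y \<in> carrier X" "x \<sqsubseteq>\<^bsub>X\<^esub> y"
  shows "f x \<sqsubseteq>\<^bsub>Y\<^esub> f y"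
  using join_pres_isotone[OF assms(2) sup_pres_is_join_pres[OF weak_sup_pres[OF assms(1)]]] assms(3-5)
  by (rule use_iso2)

lemma sup_pres_reflect:
  assumes "sup_pres X Y f" "inj_on f (carrier X)" "f \<in> carrier X \<rightarrow> carrier Y"
    "x \<in> carrier X" "y \<in> carrier X" "f x \<sqsubseteq>\<^bsub>Y\<^esub> f y"
  shows "x \<sqsubseteq>\<^bsub>X\<^esub> y"
proof -
  interpret X: complete_lattice X using assms(1) by (simp add: sup_pres_def)
  interpret Y: complete_lattice Y using assms(1) by (simp add: sup_pres_def)
  have "f x \<in> carrier Y" "f y \<in> carrier Y" using assms(3-5) by auto
  then have "f (x \<squnion>\<^bsub>X\<^esub> y) = f y"
    using sup_pres_join[OF assms(1,4,5)] Y.le_iff_meet assms(6) by simp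
  then have "x \<squnion>\<^bsub>X\<^esub> y = y" using assms(2,4,5) by (auto dest: inj_onD)
  then show ?thesis using X.le_iff_meet assms(4,5) by simp
qed

lemma alg_morphism_upset:
  assumes "alg_morphism X Y f" "a \<in> carrier X"
  shows "alg_morphism (upset X a) (upset Y (f a)) f"
proof -
  have sp: "sup_pres X Y f" and f: "f \<in> carrier X \<rightarrow> carrier Y"
    and alg: "algebraic_lattice X" "algebraic_lattice Y"
    and cp: "\<And>c. compact_elem X c \<Longrightarrow> compact_elem Y (f c)"
    using assms(1) by (auto simp: alg_morphism_def)
  have cl: "complete_lattice X" "complete_lattice Y" using sp by (auto simp: sup_pres_def)
  have fa: "f a \<in> carrier Y" using f assms(2) by auto
  have fU: "f \<in> carrier (upset X a) \<rightarrow> carrier (upset Y (f a))"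
    using sup_pres_mono[OF sp f assms(2)] f by (auto simp: upset_carrier)
  have "sup_pres (upset X a) (upset Y (f a)) f"
    unfolding sup_pres_def
  proof (intro conjI allI impI)
    fix A assume A: "A \<subseteq> carrier (upset X a)"
    then have "insert a A \<subseteq> carrier X" using assms(2) by (auto simp: upset_carrier)
    then have "f (\<Squnion>\<^bsub>X\<^esub> (insert a A)) = \<Squnion>\<^bsub>Y\<^esub> (insert (f a) (f ` A))"
      using sp by (simp add: sup_pres_def)
    moreover have "f ` A \<subseteq> carrier (upset Y (f a))" using A fU by auto
    ultimately show "f (\<Squnion>\<^bsub>upset X a\<^esub> A) = \<Squnion>\<^bsub>upset Y (f a)\<^esub> (f ` A)"
      by (simp add: sup_upset[OF cl(1) assms(2) A] sup_upset[OF cl(2) fa])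
  qed (use cl assms(2) fa in \<open>auto intro: complete_lattice_upset\<close>)
  moreover have "compact_elem (upset Y (f a)) (f c)" if c: "compact_elem (upset X a) c" for c
  proof -
    obtain k where k: "compact_elem X k" "c = k \<squnion>\<^bsub>X\<^esub> a"
      by (rule compact_elem_upsetE[OF alg(1) assms(2) c])
    then have "f c = f k \<squnion>\<^bsub>Y\<^esub> f a"
      using sup_pres_join[OF sp compact_elem_carrier[OF k(1)] assms(2)] by simp
    then show ?thesis using compact_elem_upset_join[OF cl(2) fa cp[OF k(1)]] by simp
  qed
  ultimately show ?thesis
    using fU alg assms(2) fa by (simp add: alg_morphism_def algebraic_lattice_upset)
qed

lemma upset_bottom:
  assumes "complete_lattice L"
  shows "upset L (\<Squnion>\<^bsub>L\<^esub> {}) = L"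
proof -
  interpret complete_lattice L by fact
  have "{y \<in> carrier L. \<Squnion>\<^bsub>L\<^esub> {} \<sqsubseteq>\<^bsub>L\<^esub> y} = carrier L" by (auto intro: sup_least)
  then show ?thesis by (simp add: upset_def)
qed

lemma normal_epi_join_upset:
  assumes "algebraic_lattice L" "a \<in> carrier L"
  shows "normal_epi L (upset L a) (\<lambda>x. x \<squnion>\<^bsub>L\<^esub> a)"
proof -
  have cl: "complete_lattice L" using assms(1) by (simp add: algebraic_lattice_def)
  interpret L: complete_lattice L by fact
  have alg: "algebraic_lattice (upset L a)" by (rule algebraic_lattice_upset[OF assms])
  have "alg_morphism L (upset L a) (\<lambda>x. x \<squnion>\<^bsub>L\<^esub> a)"
    unfolding alg_morphism_def
  proof (intro conjI allI impI)
    show "(\<lambda>x. x \<squnion>\<^bsub>L\<^esub> a) \<in> carrier L \<rightarrow> carrier (upset L a)"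
      using assms(2) by (auto simp: upset_carrier intro: L.join_right)
    show "sup_pres L (upset L a) (\<lambda>x. x \<squnion>\<^bsub>L\<^esub> a)"
      unfolding sup_pres_def
      using cl complete_lattice_upset[OF cl assms(2)] sup_upset_join_image[OF cl assms(2)] by simp
  qed (use assms alg compact_elem_upset_join[OF cl assms(2)] in auto)
  moreover have "alg_iso (upset L a) (upset L a) id"
    using alg by (auto simp: alg_iso_def alg_morphism_def sup_pres_def algebraic_lattice_def)
  ultimately show ?thesis
    unfolding normal_epi_def using assms(2) by fastforce
qed

lemma normal_mono_upset:
  assumes "normal_mono M N i" "e \<in> carrier M"
  shows "normal_mono (upset M e) (upset N (i e)) i"
proof -
  have mor: "alg_morphism M N i" and inj: "inj_on i (carrier M)"
    and down: "\<And>y x. y \<in> carrier N \<Longrightarrow> x \<in> carrier M \<Longrightarrow> y \<sqsubseteq>\<^bsub>N\<^esub> i x \<Longrightarrow> y \<in> i ` carrier M"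
    using assms(1) by (auto simp: normal_mono_def)
  have sp: "sup_pres M N i" and fi: "i \<in> carrier M \<rightarrow> carrier N"
    using mor by (auto simp: alg_morphism_def)
  show ?thesis unfolding normal_mono_def
  proof (intro conjI ballI impI)
    show "alg_morphism (upset M e) (upset N (i e)) i" by (rule alg_morphism_upset[OF mor assms(2)])
    show "inj_on i (carrier (upset M e))"
      using inj by (rule inj_on_subset) (auto simp: upset_carrier)
    fix y x assume y: "y \<in> carrier (upset N (i e))" and x: "x \<in> carrier (upset M e)"
      and le: "y \<sqsubseteq>\<^bsub>upset N (i e)\<^esub> i x"
    have y': "y \<in> carrier N" "i e \<sqsubseteq>\<^bsub>N\<^esub> y" using y by (auto simp: upset_carrier)
    obtain m where m: "m \<in> carrier M" "y = i m"
      using down[OF y'(1)] x le by (auto simp: upset_carrier)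
    then have "e \<sqsubseteq>\<^bsub>M\<^esub> m" using sup_pres_reflect[OF sp inj fi assms(2) m(1)] y'(2) by simp
    then show "y \<in> i ` carrier (upset M e)" using m by (auto simp: upset_carrier)
  qed
qed

lemma normal_mono_compact_reflect:
  assumes "normal_mono M N i" "m \<in> carrier M" "compact_elem N (i m)"
  shows "compact_elem M m"
proof -
  have sp: "sup_pres M N i" and fi: "i \<in> carrier M \<rightarrow> carrier N" and inj: "inj_on i (carrier M)"
    using assms(1) by (auto simp: normal_mono_def alg_morphism_def)
  interpret M: complete_lattice M using sp by (simp add: sup_pres_def)
  show ?thesis unfolding compact_elem_def
  proof (intro conjI allI impI)
    fix Y assume Y: "Y \<subseteq> carrier M" and le: "m \<sqsubseteq>\<^bsub>M\<^esub> \<Squnion>\<^bsub>M\<^esub> Y"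
    have "i m \<sqsubseteq>\<^bsub>N\<^esub> \<Squnion>\<^bsub>N\<^esub> (i ` Y)"
      using sup_pres_mono[OF sp fi assms(2) _ le] sp Y by (simp add: sup_pres_def)
    moreover have "i ` Y \<subseteq> carrier N" using fi Y by auto
    ultimately obtain G where G: "finite G" "G \<subseteq> i ` Y" "i m \<sqsubseteq>\<^bsub>N\<^esub> \<Squnion>\<^bsub>N\<^esub> G"
      using assms(3) by (auto simp: compact_elem_def)
    obtain F where F: "F \<subseteq> Y" "finite F" "G = i ` F"
      using finite_subset_image[OF G(1,2)] by blast
    have "i (\<Squnion>\<^bsub>M\<^esub> F) = \<Squnion>\<^bsub>N\<^esub> G" using sp F Y by (auto simp: sup_pres_def)
    then have "m \<sqsubseteq>\<^bsub>M\<^esub> \<Squnion>\<^bsub>M\<^esub> F"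
      using sup_pres_reflect[OF sp inj fi assms(2)] G(3) F(1) Y by auto
    then show "\<exists>F. finite F \<and> F \<subseteq> Y \<and> m \<sqsubseteq>\<^bsub>M\<^esub> \<Squnion>\<^bsub>M\<^esub> F" using F by blast
  qed (rule assms(2))
qed

lemma alg_morphism_lift_normal_mono:
  assumes "normal_mono M N i" "alg_morphism P N g" "g ` carrier P \<subseteq> i ` carrier M"
  shows "alg_morphism P M (\<lambda>x. the_inv_into (carrier M) i (g x))"
    (is "alg_morphism P M ?u")
proof -
  have sp: "sup_pres M N i" and inj: "inj_on i (carrier M)" and algM: "algebraic_lattice M"
    using assms(1) by (auto simp: normal_mono_def alg_morphism_def)
  have gsp: "sup_pres P N g" and algP: "algebraic_lattice P"
    and gc: "\<And>c. compact_elem P c \<Longrightarrow> compact_elem N (g c)"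
    using assms(2) by (auto simp: alg_morphism_def)
  interpret M: complete_lattice M using sp by (simp add: sup_pres_def)
  interpret P: complete_lattice P using gsp by (simp add: sup_pres_def)
  have u: "?u x \<in> carrier M" "i (?u x) = g x" if "x \<in> carrier P" for x
  proof -
    have "g x \<in> i ` carrier M" using assms(3) that by auto
    then show "?u x \<in> carrier M" "i (?u x) = g x"
      using inj by (auto intro: the_inv_into_into f_the_inv_into_f)
  qed
  have "sup_pres P M ?u"
    unfolding sup_pres_def
  proof (intro conjI allI impI)
    fix A assume A: "A \<subseteq> carrier P"
    have uA: "?u ` A \<subseteq> carrier M" using A u by auto
    have "i (\<Squnion>\<^bsub>M\<^esub> (?u ` A)) = \<Squnion>\<^bsub>N\<^esub> (i ` ?u ` A)" using sp uA by (simp add: sup_pres_def)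
    also have "i ` ?u ` A = g ` A" unfolding image_image using A u(2) by (intro image_cong) auto
    also have "\<Squnion>\<^bsub>N\<^esub> (g ` A) = g (\<Squnion>\<^bsub>P\<^esub> A)" using gsp A by (simp add: sup_pres_def)
    also have "\<dots> = i (?u (\<Squnion>\<^bsub>P\<^esub> A))" using u(2)[of "\<Squnion>\<^bsub>P\<^esub> A"] A by simp
    finally have "i (\<Squnion>\<^bsub>M\<^esub> (?u ` A)) = i (?u (\<Squnion>\<^bsub>P\<^esub> A))" .
    from inj_onD[OF inj this M.sup_closed[OF uA] u(1)[OF P.sup_closed[OF A]]]
    show "?u (\<Squnion>\<^bsub>P\<^esub> A) = \<Squnion>\<^bsub>M\<^esub> (?u ` A)" by simp
  qed (use P.complete_lattice_axioms M.complete_lattice_axioms in auto)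
  moreover have "compact_elem M (?u c)" if "compact_elem P c" for c
    using that normal_mono_compact_reflect[OF assms(1)] gc u compact_elem_carrier by metis
  ultimately show ?thesis using algP algM u by (auto simp: alg_morphism_def)
qed

lemma is_pullback_upset:
  assumes "normal_mono M N i" "e \<in> carrier M"
  shows "is_pullback M N (upset M e) (upset N (i e)) i
           (\<lambda>x. x \<squnion>\<^bsub>M\<^esub> e) (\<lambda>y. y \<squnion>\<^bsub>N\<^esub> i e) i TYPE('p)"
proof -
  have sp: "sup_pres M N i" and fi: "i \<in> carrier M \<rightarrow> carrier N" and inj: "inj_on i (carrier M)"
    and down: "\<And>y x. y \<in> carrier N \<Longrightarrow> x \<in> carrier M \<Longrightarrow> y \<sqsubseteq>\<^bsub>N\<^esub> i x \<Longrightarrow> y \<in> i ` carrier M"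
    using assms(1) by (auto simp: normal_mono_def alg_morphism_def)
  interpret M: complete_lattice M using sp by (simp add: sup_pres_def)
  interpret N: complete_lattice N using sp by (simp add: sup_pres_def)
  have ie: "i e \<in> carrier N" using fi assms(2) by auto
  have comm: "i x \<squnion>\<^bsub>N\<^esub> i e = i (x \<squnion>\<^bsub>M\<^esub> e)" if "x \<in> carrier M" for x
    using sup_pres_join[OF sp that assms(2)] by simp
  show ?thesis unfolding is_pullback_def
  proof (intro conjI allI impI ballI)
    fix P :: "'p gorder" and g h
    assume "alg_morphism P N g \<and> alg_morphism P (upset M e) h \<and>
      (\<forall>x\<in>carrier P. g x \<squnion>\<^bsub>N\<^esub> i e = i (h x))"
    then have g: "alg_morphism P N g" and h: "h \<in> carrier P \<rightarrow> carrier (upset M e)"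
      and gh: "\<And>x. x \<in> carrier P \<Longrightarrow> g x \<squnion>\<^bsub>N\<^esub> i e = i (h x)"
      by (auto simp: alg_morphism_def)
    have hM: "h x \<in> carrier M" if "x \<in> carrier P" for x using h that by (auto simp: upset_carrier)
    have gP: "g x \<in> carrier N" if "x \<in> carrier P" for x using g that by (auto simp: alg_morphism_def)
    have gi: "g x \<in> i ` carrier M" if x: "x \<in> carrier P" for x
    proof -
      have "g x \<sqsubseteq>\<^bsub>N\<^esub> i (h x)" using gh[OF x] N.join_left[OF gP[OF x] ie] by simp
      then show ?thesis using down gP hM x by blast
    qed
    define u where "u = (\<lambda>x. the_inv_into (carrier M) i (g x))"
    have uM: "u x \<in> carrier M" and iu: "i (u x) = g x" if "x \<in> carrier P" for x
      using gi[OF that] inj by (auto simp: u_def intro: the_inv_into_into f_the_inv_into_f)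
    show "\<exists>u. alg_morphism P M u \<and> (\<forall>x\<in>carrier P. i (u x) = g x \<and> u x \<squnion>\<^bsub>M\<^esub> e = h x) \<and>
           (\<forall>u'. alg_morphism P M u' \<and> (\<forall>x\<in>carrier P. i (u' x) = g x \<and> u' x \<squnion>\<^bsub>M\<^esub> e = h x)
              \<longrightarrow> (\<forall>x\<in>carrier P. u' x = u x))"
    proof (intro exI conjI allI impI ballI)
      show "alg_morphism P M u"
        unfolding u_def using gi by (intro alg_morphism_lift_normal_mono[OF assms(1) g]) blast
      fix x assume x: "x \<in> carrier P"
      show "i (u x) = g x" by (rule iu[OF x])
      have "i (u x \<squnion>\<^bsub>M\<^esub> e) = i (h x)" using comm[OF uM[OF x]] iu[OF x] gh[OF x] by simp
      then show "u x \<squnion>\<^bsub>M\<^esub> e = h x"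
        by (rule inj_onD[OF inj _ M.join_closed[OF uM[OF x] assms(2)] hM[OF x]])
    next
      fix u' x
      assume "alg_morphism P M u' \<and> (\<forall>x\<in>carrier P. i (u' x) = g x \<and> u' x \<squnion>\<^bsub>M\<^esub> e = h x)"
        and x: "x \<in> carrier P"
      then have "u' x \<in> carrier M" "i (u' x) = i (u x)" using iu[OF x] by (auto simp: alg_morphism_def)
      then show "u' x = u x" using uM[OF x] by (auto dest: inj_onD[OF inj])
    qed
  qed (use comm in simp)
qed

lemma is_pushout_upset:
  assumes "normal_mono M N i" "e \<in> carrier M"
  shows "is_pushout M N (upset M e) (upset N (i e)) i
           (\<lambda>x. x \<squnion>\<^bsub>M\<^esub> e) (\<lambda>y. y \<squnion>\<^bsub>N\<^esub> i e) i TYPE('q)"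
proof -
  have sp: "sup_pres M N i" and fi: "i \<in> carrier M \<rightarrow> carrier N"
    using assms(1) by (auto simp: normal_mono_def alg_morphism_def)
  interpret M: complete_lattice M using sp by (simp add: sup_pres_def)
  interpret N: complete_lattice N using sp by (simp add: sup_pres_def)
  have ie: "i e \<in> carrier N" using fi assms(2) by auto
  have comm: "i x \<squnion>\<^bsub>N\<^esub> i e = i (x \<squnion>\<^bsub>M\<^esub> e)" if "x \<in> carrier M" for x
    using sup_pres_join[OF sp that assms(2)] by simp
  show ?thesis unfolding is_pushout_def
  proof (intro conjI allI impI ballI)
    fix Q :: "'q gorder" and g h
    assume "alg_morphism N Q g \<and> alg_morphism (upset M e) Q h \<and>
      (\<forall>x\<in>carrier M. g (i x) = h (x \<squnion>\<^bsub>M\<^esub> e))"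
    then have g: "alg_morphism N Q g" and gh: "\<And>x. x \<in> carrier M \<Longrightarrow> g (i x) = h (x \<squnion>\<^bsub>M\<^esub> e)"
      by auto
    have gsp: "sup_pres N Q g" and gQ: "g \<in> carrier N \<rightarrow> carrier Q"
      using g by (auto simp: alg_morphism_def)
    interpret Q: complete_lattice Q using gsp by (simp add: sup_pres_def)
    \<comment> \<open>\<open>e\<close> and the bottom of \<open>M\<close> have the same image under \<open>x \<mapsto> x \<squnion> e\<close>, so \<open>g\<close> kills \<open>i e\<close>\<close>
    have bot: "g (i e) = \<Squnion>\<^bsub>Q\<^esub> {}"
    proof -
      have "\<Squnion>\<^bsub>M\<^esub> {} \<in> carrier M" "\<Squnion>\<^bsub>M\<^esub> {} \<sqsubseteq>\<^bsub>M\<^esub> e" using assms(2) by (auto intro: M.sup_least)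
      then have "e \<squnion>\<^bsub>M\<^esub> e = e \<squnion>\<^bsub>M\<^esub> \<Squnion>\<^bsub>M\<^esub> {}"
        using M.join_eq_left assms(2) M.le_refl by metis
      then have "g (i e) = h (e \<squnion>\<^bsub>M\<^esub> \<Squnion>\<^bsub>M\<^esub> {})" using gh[OF assms(2)] by simp
      also have "\<dots> = g (i (\<Squnion>\<^bsub>M\<^esub> {}))" using gh[of "\<Squnion>\<^bsub>M\<^esub> {}"] join_comm[of M e] by simp
      also have "\<dots> = \<Squnion>\<^bsub>Q\<^esub> {}" using sup_pres_bottom[OF sp] sup_pres_bottom[OF gsp] by simp
      finally show ?thesis .
    qed
    have v: "alg_morphism (upset N (i e)) Q g"
      using alg_morphism_upset[OF g ie] upset_bottom[OF Q.complete_lattice_axioms] bot by simp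
    have gy: "g (y \<squnion>\<^bsub>N\<^esub> i e) = g y" if "y \<in> carrier N" for y
    proof -
      have "g (y \<squnion>\<^bsub>N\<^esub> i e) = g y \<squnion>\<^bsub>Q\<^esub> \<Squnion>\<^bsub>Q\<^esub> {}" using sup_pres_join[OF gsp that ie] bot by simp
      also have "\<dots> = g y" by (rule Q.join_eq_left) (use gQ that in \<open>auto intro: Q.sup_least\<close>)
      finally show ?thesis .
    qed
    show "\<exists>v. alg_morphism (upset N (i e)) Q v \<and> (\<forall>y\<in>carrier N. v (y \<squnion>\<^bsub>N\<^esub> i e) = g y) \<and>
           (\<forall>z\<in>carrier (upset M e). v (i z) = h z) \<and>
           (\<forall>v'. alg_morphism (upset N (i e)) Q v' \<and> (\<forall>y\<in>carrier N. v' (y \<squnion>\<^bsub>N\<^esub> i e) = g y) \<and>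
                 (\<forall>z\<in>carrier (upset M e). v' (i z) = h z) \<longrightarrow>
              (\<forall>w\<in>carrier (upset N (i e)). v' w = v w))"
    proof (intro exI conjI allI impI ballI)
      show "alg_morphism (upset N (i e)) Q g" by (rule v)
      show "g (y \<squnion>\<^bsub>N\<^esub> i e) = g y" if "y \<in> carrier N" for y using gy[OF that] .
      show "g (i z) = h z" if "z \<in> carrier (upset M e)" for z
        using that gh M.join_eq_left[OF _ assms(2)] by (auto simp: upset_carrier)
    next
      fix v' w assume "alg_morphism (upset N (i e)) Q v' \<and> (\<forall>y\<in>carrier N. v' (y \<squnion>\<^bsub>N\<^esub> i e) = g y) \<and>
                 (\<forall>z\<in>carrier (upset M e). v' (i z) = h z)"
        and "w \<in> carrier (upset N (i e))"
      then show "v' w = g w" using N.join_eq_left[OF _ ie] by (auto simp: upset_carrier)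
    qed
  qed (use comm in simp)
qed

theorem mainTheorem18:
  fixes M :: "'a gorder" and N :: "'b gorder" and i :: "'a \<Rightarrow> 'b" and L :: "'a set"
  assumes "normal_mono M N i"
    and "algebraic_sublattice L M"
  defines "oneL \<equiv> \<Squnion>\<^bsub>M\<lparr>carrier := L\<rparr>\<^esub> L"
  defines "ML \<equiv> upset M oneL" and "NL \<equiv> upset N (i oneL)"
  defines "\<pi> \<equiv> (\<lambda>x. x \<squnion>\<^bsub>M\<^esub> oneL)" and "\<pi>' \<equiv> (\<lambda>y. y \<squnion>\<^bsub>N\<^esub> i oneL)"
  shows "normal_epi M ML \<pi> \<and> normal_epi N NL \<pi>' \<and> normal_mono ML NL i \<and>
         is_pullback M N ML NL i \<pi> \<pi>' i TYPE('p) \<and>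
         is_pushout M N ML NL i \<pi> \<pi>' i TYPE('q)"
proof -
  have algM: "algebraic_lattice M" and algN: "algebraic_lattice N" and i: "i \<in> carrier M \<rightarrow> carrier N"
    using assms(1) by (auto simp: normal_mono_def alg_morphism_def)
  have LM: "L \<subseteq> carrier M" and "complete_lattice (M\<lparr>carrier := L\<rparr>)"
    using assms(2) by (auto simp: algebraic_sublattice_def algebraic_lattice_def)
  then interpret Lsub: complete_lattice "M\<lparr>carrier := L\<rparr>" by simp
  have "oneL \<in> L" unfolding oneL_def using Lsub.sup_closed[of L] by simp
  then have e: "oneL \<in> carrier M" using LM by auto
  then have ie: "i oneL \<in> carrier N" using i by auto
  show ?thesis
    unfolding \<open>ML \<equiv> upset M oneL\<close> NL_def \<pi>_def \<pi>'_def
    using normal_epi_join_upset[OF algM e] normal_epi_join_upset[OF algN ie]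
      normal_mono_upset[OF assms(1) e] is_pullback_upset[OF assms(1) e] is_pushout_upset[OF assms(1) e]
    by blast
qed

end
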